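(* Let $G$ be connected with weights $w:E\to\mathbb{R}_{>0}$, let $\pi$ be a vertex order and let $m_C$ be a customized metric on $G_\pi^*$. Run the perfect customization: set $m:=m_C$, and process the edges $\{x,y\}$ of $G_\pi^*$, with $x$ the lower-ranked endpoint, in nonincreasing order of the rank of $x$ (ties arbitrary); when processing $\{x,y\}$, for every vertex $z\neq y$ of rank larger than the rank of $x$ that is adjacent to both $x$ and $y$ in $G_\pi^*$, set $m(\{x,y\}):=\min\{m(\{x,y\}),m(\{x,z\})+m(\{z,y\})\}$ using current values. Then the resulting metric $m_P$ satisfies $m_P(\{x,y\})=\mathrm{dist}_I(x,y)$ for every edge $\{x,y\}$ of $G_\pi^*$, i.e. $m_P$ is the perfect metric.
   Context: Let $G=(V,E)$ be a finite simple undirected graph with $n=|V|$ vertices. A vertex order is a bijection $\pi:\{1,\dots,n\}\to V$; the rank of $v$ is $\pi^{-1}(v)$. Contracting a vertex $v$ in a graph means deleting $v$ and its incident edges and adding an edge between every pair of former neighbors of $v$ that are not already adjacent. The core graph $G_{\pi,i}$ is obtained from $G$ by contracting $\pi(1),\dots,\pi(i-1)$ in this order. $G_\pi^*$ is the graph on $V$ whose edge set is the union of the edge sets of all $G_{\pi,i}$, $i=1,\dots,n$ (i.e. $G$ together with all edges inserted during the contractions). Let $w:E\to\mathbb{R}_{>0}$ and let $\mathrm{dist}_I(s,t)$ be the shortest $s$–$t$ path length in $(G,w)$. A metric is a map $m$ assigning to every edge of $G_\pi^*$ a value in $\mathbb{R}_{>0}\cup\{\infty\}$; the $m$-length of a path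 in $G_\pi^*$ is the sum of $m$ over its edges. An up-down path is a path $v_0,\dots,v_k$ in $G_\pi^*$ for which there is $j$ with the ranks strictly increasing along $v_0,\dots,v_j$ and strictly decreasing along $v_j,\dots,v_k$. $\mathrm{dist}_A(s,t)$ is the minimum $m$-length of an $s$–$t$ path in $G_\pi^*$, and $\mathrm{dist}_{UD}(s,t)$ the minimum $m$-length of an up-down $s$–$t$ path ($\infty$ if none). The metric $m$ respects $w$ if $\mathrm{dist}_A(s,t)=\mathrm{dist}_I(s,t)$ for all $s,t$; it is customized if moreover $\mathrm{dist}_{UD}(s,t)=\mathrm{dist}_A(s,t)$ for all $s,t$. The perfect metric is the metric $m_P(\{x,y\})=\mathrm{dist}_I(x,y)$ for every edge $\{x,y\}$ of $G_\pi^*$. *)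

theory Defs
  imports Main "HOL-Library.Extended_Real"
begin

definition simple_graph :: "'a set \<Rightarrow> 'a set set \<Rightarrow> bool" where
  "simple_graph V E \<longleftrightarrow> finite V \<and>
     E \<subseteq> {{a, b} | a b. a \<noteq> b \<and> a \<in> V \<and> b \<in> V}"

definition is_path :: "'a set set \<Rightarrow> 'a list \<Rightarrow> 'a \<Rightarrow> 'a \<Rightarrow> bool" where
  "is_path F p s t \<longleftrightarrow> p \<noteq> [] \<and> hd p = s \<and> last p = t \<and> distinct p \<and>
     (\<forall>i < length p - 1. {p ! i, p ! Suc i} \<in> F)"

definition connected_graph :: "'a set \<Rightarrow> 'a set set \<Rightarrow> bool" where
  "connected_graph V E \<longleftrightarrow> (\<forall>s\<in>V. \<forall>t\<in>V. \<exists>p. is_path E p s t)"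

definition plen :: "('a set \<Rightarrow> ereal) \<Rightarrow> 'a list \<Rightarrow> ereal" where
  "plen m p = sum_list (map (\<lambda>i. m {p ! i, p ! Suc i}) [0..<length p - 1])"

definition dist :: "'a set set \<Rightarrow> ('a set \<Rightarrow> ereal) \<Rightarrow> 'a \<Rightarrow> 'a \<Rightarrow> ereal" where
  "dist F m s t = Inf {plen m p | p. is_path F p s t}"

definition dist_I :: "'a set set \<Rightarrow> ('a set \<Rightarrow> real) \<Rightarrow> 'a \<Rightarrow> 'a \<Rightarrow> ereal" where
  "dist_I E w s t = dist E (\<lambda>e. ereal (w e)) s t"

definition vertex_order :: "'a set \<Rightarrow> (nat \<Rightarrow> 'a) \<Rightarrow> bool" where
  "vertex_order V \<pi> \<longleftrightarrow> bij_betw \<pi> {1..card V} V"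

definition rank :: "'a set \<Rightarrow> (nat \<Rightarrow> 'a) \<Rightarrow> 'a \<Rightarrow> nat" where
  "rank V \<pi> v = inv_into {1..card V} \<pi> v"

definition contract :: "'a set set \<Rightarrow> 'a \<Rightarrow> 'a set set" where
  "contract F v = {e \<in> F. v \<notin> e} \<union>
     {{a, b} | a b. a \<noteq> b \<and> {v, a} \<in> F \<and> {v, b} \<in> F}"

text \<open>core_edges E pi k: edges of the graph obtained by contracting
  pi 1, ..., pi k in this order; so the core graph G_{pi,i} has edge set
  core_edges E pi (i - 1).\<close>

fun core_edges :: "'a set set \<Rightarrow> (nat \<Rightarrow> 'a) \<Rightarrow> nat \<Rightarrow> 'a set set" where
  "core_edges E \<pi> 0 = E"
| "core_edges E \<pi> (Suc k) = contract (core_edges E \<pi> k) (\<pi> (Suc k))"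

definition Gstar :: "'a set \<Rightarrow> 'a set set \<Rightarrow> (nat \<Rightarrow> 'a) \<Rightarrow> 'a set set" where
  "Gstar V E \<pi> = (\<Union>i\<in>{1..card V}. core_edges E \<pi> (i - 1))"

definition is_metric :: "'a set \<Rightarrow> 'a set set \<Rightarrow> (nat \<Rightarrow> 'a) \<Rightarrow> ('a set \<Rightarrow> ereal) \<Rightarrow> bool" where
  "is_metric V E \<pi> m \<longleftrightarrow> (\<forall>e \<in> Gstar V E \<pi>. m e > 0)"

definition dist_A :: "'a set \<Rightarrow> 'a set set \<Rightarrow> (nat \<Rightarrow> 'a) \<Rightarrow> ('a set \<Rightarrow> ereal) \<Rightarrow> 'a \<Rightarrow> 'a \<Rightarrow> ereal" where
  "dist_A V E \<pi> m s t = dist (Gstar V E \<pi>) m s t"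

definition up_down :: "('a \<Rightarrow> nat) \<Rightarrow> 'a list \<Rightarrow> bool" where
  "up_down rk p \<longleftrightarrow> (\<exists>j < length p.
     sorted_wrt (<) (map rk (take (Suc j) p)) \<and> sorted_wrt (>) (map rk (drop j p)))"

definition dist_UD :: "'a set \<Rightarrow> 'a set set \<Rightarrow> (nat \<Rightarrow> 'a) \<Rightarrow> ('a set \<Rightarrow> ereal) \<Rightarrow> 'a \<Rightarrow> 'a \<Rightarrow> ereal" where
  "dist_UD V E \<pi> m s t =
     Inf {plen m p | p. is_path (Gstar V E \<pi>) p s t \<and> up_down (rank V \<pi>) p}"

definition respects_w :: "'a set \<Rightarrow> 'a set set \<Rightarrow> (nat \<Rightarrow> 'a) \<Rightarrow> ('a set \<Rightarrow> real) \<Rightarrow> ('a set \<Rightarrow> ereal) \<Rightarrow> bool" where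
  "respects_w V E \<pi> w m \<longleftrightarrow> (\<forall>s\<in>V. \<forall>t\<in>V. dist_A V E \<pi> m s t = dist_I E w s t)"

definition customized :: "'a set \<Rightarrow> 'a set set \<Rightarrow> (nat \<Rightarrow> 'a) \<Rightarrow> ('a set \<Rightarrow> real) \<Rightarrow> ('a set \<Rightarrow> ereal) \<Rightarrow> bool" where
  "customized V E \<pi> w m \<longleftrightarrow> is_metric V E \<pi> m \<and> respects_w V E \<pi> w m \<and>
     (\<forall>s\<in>V. \<forall>t\<in>V. dist_UD V E \<pi> m s t = dist_A V E \<pi> m s t)"

text \<open>Since processing {x,y} modifies only m{x,y}, doing these updates one z after
  another is the same as one update with the minimum over all such z.\<close>

definition perfect_step :: "'a set \<Rightarrow> 'a set set \<Rightarrow> (nat \<Rightarrow> 'a) \<Rightarrow>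
    ('a set \<Rightarrow> ereal) \<Rightarrow> 'a \<times> 'a \<Rightarrow> ('a set \<Rightarrow> ereal)" where
  "perfect_step V E \<pi> m xy = (case xy of (x, y) \<Rightarrow>
     m({x, y} := min (m {x, y})
        (INF z \<in> {z. z \<noteq> y \<and> rank V \<pi> z > rank V \<pi> x \<and>
                    {x, z} \<in> Gstar V E \<pi> \<and> {z, y} \<in> Gstar V E \<pi>}.
           m {x, z} + m {z, y})))"

definition valid_order :: "'a set \<Rightarrow> 'a set set \<Rightarrow> (nat \<Rightarrow> 'a) \<Rightarrow> ('a \<times> 'a) list \<Rightarrow> bool" where
  "valid_order V E \<pi> es \<longleftrightarrow>
     (\<forall>(x, y) \<in> set es. rank V \<pi> x < rank V \<pi> y) \<and>
     distinct (map (\<lambda>(x, y). {x, y}) es) \<and>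
     set (map (\<lambda>(x, y). {x, y}) es) = Gstar V E \<pi> \<and>
     sorted_wrt (\<lambda>(x, _) (x', _). rank V \<pi> x \<ge> rank V \<pi> x') es"

definition perfect_customization :: "'a set \<Rightarrow> 'a set set \<Rightarrow> (nat \<Rightarrow> 'a) \<Rightarrow>
    ('a \<times> 'a) list \<Rightarrow> ('a set \<Rightarrow> ereal) \<Rightarrow> ('a set \<Rightarrow> ereal)" where
  "perfect_customization V E \<pi> es m = foldl (perfect_step V E \<pi>) m es"

end

theory Submission
  imports Defs
begin

text \<open>
  Let d be the distance function of G* under the customized metric mC; since mC
  respects w, d coincides with the shortest path distance of (G, w) on V.  We show
  that processing an edge {x, y} (rank x < rank y) sets its value to exactly d x y,
  provided all edges processed so far are exact and the current metric M lies
  between d and mC.  The value never drops below d x y by the triangle inequality.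
  Conversely, mC is customized, so d x y is attained by an up-down path
  x, v, ..., y.  Its second vertex v lies above x, hence {v, y} is an edge of G*
  (two higher neighbours of x become adjacent when x is contracted), and {v, y} was
  processed earlier because both its endpoints lie above x; the triangle x, v, y
  therefore yields the matching upper bound.
\<close>

section \<open>Walks and their lengths\<close>

text \<open>Recursive versions of the adjacency condition and of the length of a path,
  convenient for induction over lists.\<close>

fun walk :: "'a set set \<Rightarrow> 'a list \<Rightarrow> bool" where
  "walk F [] = True"
| "walk F [a] = True"
| "walk F (a # b # p) \<longleftrightarrow> {a, b} \<in> F \<and> walk F (b # p)"

fun walk_len :: "('a set \<Rightarrow> ereal) \<Rightarrow> 'a list \<Rightarrow> ereal" where
  "walk_len m [] = 0"
| "walk_len m [a] = 0"
| "walk_len m (a # b # p) = m {a, b} + walk_len m (b # p)"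

lemma walk_iff_nth: "walk F p \<longleftrightarrow> (\<forall>i < length p - 1. {p ! i, p ! Suc i} \<in> F)"
proof (induction p rule: induct_list012)
  case (3 a b p)
  show ?case
  proof
    assume "walk F (a # b # p)"
    then show "\<forall>i < length (a # b # p) - 1. {(a # b # p) ! i, (a # b # p) ! Suc i} \<in> F"
      using 3 by (auto simp: less_Suc_eq_0_disj)
  next
    assume adj: "\<forall>i < length (a # b # p) - 1. {(a # b # p) ! i, (a # b # p) ! Suc i} \<in> F"
    have "{a, b} \<in> F" using adj[rule_format, of 0] by simp
    moreover have "walk F (b # p)" using 3 adj by auto
    ultimately show "walk F (a # b # p)" by simp
  qed
qed auto

lemma plen_eq_walk_len: "plen m p = walk_len m p"
proof (induction m p rule: walk_len.induct)
  case (3 m a b p)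
  have "[0..<length (a # b # p) - 1] = 0 # map Suc [0..<length (b # p) - 1]"
    by (simp add: upt_conv_Cons map_Suc_upt del: upt_Suc)
  then show ?case using 3 by (simp add: plen_def o_def)
qed (auto simp: plen_def)

lemma is_path_iff_walk:
  "is_path F p s t \<longleftrightarrow> p \<noteq> [] \<and> hd p = s \<and> last p = t \<and> distinct p \<and> walk F p"
  unfolding is_path_def walk_iff_nth by auto

lemma walk_append: "walk F (p @ a # q) \<longleftrightarrow> walk F (p @ [a]) \<and> walk F (a # q)"
proof (induction p rule: induct_list012)
  case 2 then show ?case by (cases q) auto
qed auto

lemma walk_len_append: "walk_len m (p @ a # q) = walk_len m (p @ [a]) + walk_len m (a # q)"
proof (induction p rule: induct_list012)
  case (2 x) then show ?case by (cases q) auto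
next
  case (3 x y zs) then show ?case by (simp add: add.assoc)
qed auto

lemma walk_rev: "walk F (rev p) = walk F p"
proof (induction p rule: walk.induct)
  case (3 F a b p)
  have "rev (a # b # p) = rev p @ b # [a]" by simp
  then show ?case using 3 walk_append[of F "rev p" b "[a]"] by (auto simp: insert_commute)
qed auto

lemma walk_len_rev: "walk_len m (rev p) = walk_len m p"
proof (induction m p rule: walk_len.induct)
  case (3 m a b p)
  have "rev (a # b # p) = rev p @ b # [a]" by simp
  then show ?case using 3 walk_len_append[of m "rev p" b "[a]"]
    by (simp add: insert_commute add.commute)
qed auto

lemma walk_len_nonneg: "walk F p \<Longrightarrow> \<forall>e\<in>F. m e \<ge> 0 \<Longrightarrow> walk_len m p \<ge> 0"
  by (induction p rule: walk.induct) auto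

lemma is_path_rev: "is_path F p s t \<Longrightarrow> is_path F (rev p) t s"
  unfolding is_path_iff_walk by (auto simp: walk_rev hd_rev last_rev)

lemma walk_to_path:
  assumes "walk F p" "p \<noteq> []" and nonneg: "\<forall>e\<in>F. m e \<ge> 0"
  shows "\<exists>q. is_path F q (hd p) (last p) \<and> walk_len m q \<le> walk_len m p"
  using assms(1,2)
proof (induction p rule: induct_list012)
  case (2 a)
  show ?case by (intro exI[of _ "[a]"]) (simp add: is_path_iff_walk)
next
  case (3 a b p)
  have ab: "{a, b} \<in> F" and walk_tail: "walk F (b # p)" using "3.prems" by simp_all
  obtain q where q: "is_path F q b (last (b # p))" "walk_len m q \<le> walk_len m (b # p)"
    using "3.IH"(2) walk_tail by auto
  have len_ab: "walk_len m (b # p) \<le> walk_len m (a # b # p)"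
    using ab nonneg by (simp add: add_increasing)
  show ?case
  proof (cases "a \<in> set q")
    case True
    then obtain q1 q2 where q12: "q = q1 @ a # q2" by (meson split_list)
    have "walk F q" using q(1) by (simp add: is_path_iff_walk)
    then have walks: "walk F (q1 @ [a])" "walk F (a # q2)"
      using q12 walk_append[of F q1 a q2] by simp_all
    have "is_path F (a # q2) a (last (a # b # p))"
      using q(1) q12 walks(2) by (auto simp: is_path_iff_walk)
    moreover have "walk_len m (a # q2) \<le> walk_len m q"
      using q12 walk_len_append[of m q1 a q2] walk_len_nonneg[OF walks(1) nonneg]
      by (simp add: add_increasing)
    ultimately show ?thesis using q(2) len_ab by (auto intro: order_trans)
  next
    case False
    obtain q' where q': "q = b # q'" using q(1) by (cases q) (auto simp: is_path_iff_walk)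
    have "is_path F (a # q) a (last (a # b # p))" using q(1) q' ab False by (auto simp: is_path_iff_walk)
    moreover have "walk_len m (a # q) \<le> walk_len m (a # b # p)"
      using q(2) q' by (simp add: add_left_mono)
    ultimately show ?thesis by auto
  qed
qed simp

lemma dist_sym: "dist F m s t = dist F m t s"
proof -
  have sub: "{plen m p | p. is_path F p s t} \<subseteq> {plen m p | p. is_path F p t s}" for s t
  proof
    fix u assume "u \<in> {plen m p | p. is_path F p s t}"
    then obtain p where "u = plen m p" "is_path F p s t" by blast
    then have "u = plen m (rev p)" "is_path F (rev p) t s"
      by (simp_all add: plen_eq_walk_len walk_len_rev is_path_rev)
    then show "u \<in> {plen m p | p. is_path F p t s}" by blast
  qed
  have "{plen m p | p. is_path F p s t} = {plen m p | p. is_path F p t s}"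
    using sub[of s t] sub[of t s] by (rule subset_antisym)
  then show ?thesis unfolding dist_def by simp
qed

lemma dist_le_path: "is_path F p s t \<Longrightarrow> dist F m s t \<le> plen m p"
  unfolding dist_def by (blast intro: Inf_lower)

lemma dist_nonneg: "\<forall>e\<in>F. m e \<ge> 0 \<Longrightarrow> dist F m s t \<ge> 0"
  unfolding dist_def
  by (rule Inf_greatest) (auto simp: plen_eq_walk_len is_path_iff_walk intro: walk_len_nonneg)

text \<open>Over a finite vertex set there are only finitely many paths, so a finite
  distance is attained by some path.\<close>

lemma finite_path_lengths:
  assumes "\<forall>e\<in>F. \<exists>a b. e = {a, b} \<and> a \<in> VV \<and> b \<in> VV" "finite VV"
  shows "finite {plen m p | p. is_path F p s t}"
proof -
  have in_VV: "set p \<subseteq> insert (hd p) VV" if "walk F p" "p \<noteq> []" for p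
    using that
  proof (induction p rule: induct_list012)
    case (3 a b p)
    then have "a \<in> VV" "b \<in> VV" using assms(1) by (auto simp: doubleton_eq_iff)
    then show ?case using 3 by auto
  qed auto
  have "{p. is_path F p s t} \<subseteq> {xs. set xs \<subseteq> insert s VV \<and> distinct xs}"
    using in_VV by (auto simp: is_path_iff_walk)
  then have "finite {p. is_path F p s t}"
    using finite_subset_distinct[of "insert s VV"] assms(2) finite_subset by blast
  moreover have "{plen m p | p. is_path F p s t} = plen m ` {p. is_path F p s t}" by blast
  ultimately show ?thesis by simp
qed

lemma dist_attained:
  assumes "\<forall>e\<in>F. \<exists>a b. e = {a, b} \<and> a \<in> VV \<and> b \<in> VV" "finite VV"
    and "dist F m s t \<noteq> \<infinity>"
  shows "\<exists>p. is_path F p s t \<and> plen m p = dist F m s t"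
proof -
  let ?A = "{plen m p | p. is_path F p s t}"
  have "?A \<noteq> {}" using assms(3) unfolding dist_def by (metis Inf_empty top_ereal_def)
  then have "Inf ?A \<in> ?A"
    using finite_path_lengths[OF assms(1,2)] by (intro finite_Inf_in) (auto simp: inf_min min_def)
  then show ?thesis unfolding dist_def by auto
qed

text \<open>Triangle inequality: glue shortest paths s..z and z..t to a walk and shortcut it.\<close>

lemma dist_triangle:
  assumes edges: "\<forall>e\<in>F. \<exists>a b. e = {a, b} \<and> a \<in> VV \<and> b \<in> VV" "finite VV"
    and nonneg: "\<forall>e\<in>F. m e \<ge> 0"
  shows "dist F m s t \<le> dist F m s z + dist F m z t"
proof (cases "dist F m s z = \<infinity> \<or> dist F m z t = \<infinity>")
  case True
  have "dist F m s z \<ge> 0" "dist F m z t \<ge> 0" using dist_nonneg[OF nonneg] by blast+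
  then have infinite: "dist F m s z + dist F m z t = \<infinity>" using True by auto
  show ?thesis unfolding infinite by simp
next
  case False
  then obtain p q where p: "is_path F p s z" "plen m p = dist F m s z"
    and q: "is_path F q z t" "plen m q = dist F m z t"
    using dist_attained[OF edges] by blast
  define p0 where "p0 = butlast p"
  define q0 where "q0 = tl q"
  have p0: "p = p0 @ [z]"
    using p(1) append_butlast_last_id[of p] unfolding p0_def is_path_iff_walk by simp
  have q0: "q = z # q0" using q(1) list.collapse[of q] unfolding q0_def is_path_iff_walk by simp
  let ?r = "p0 @ z # q0"
  have walk: "walk F ?r"
    using p(1) q(1) walk_append[of F p0 z q0] unfolding p0 q0 is_path_iff_walk by simp
  have ends: "hd ?r = s" "last ?r = t"
    using p(1) q(1) unfolding p0 q0 is_path_iff_walk by (auto simp: hd_append split: if_splits)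
  obtain r where r: "is_path F r s t" "walk_len m r \<le> walk_len m ?r"
    using walk_to_path[OF walk _ nonneg] ends by auto
  have "dist F m s t \<le> plen m r" using dist_le_path[OF r(1)] .
  also have "\<dots> \<le> plen m p + plen m q"
    using r(2) p0 q0 walk_len_append[of m p0 z q0] by (simp add: plen_eq_walk_len)
  finally show ?thesis using p(2) q(2) by simp
qed

lemma rank_in_range: "vertex_order V \<pi> \<Longrightarrow> v \<in> V \<Longrightarrow> rank V \<pi> v \<in> {1..card V}"
  unfolding vertex_order_def rank_def by (metis bij_betw_imp_surj_on inv_into_into)

lemma pi_rank: "vertex_order V \<pi> \<Longrightarrow> v \<in> V \<Longrightarrow> \<pi> (rank V \<pi> v) = v"
  unfolding vertex_order_def rank_def by (metis bij_betw_imp_surj_on f_inv_into_f)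

lemma rank_pi: "vertex_order V \<pi> \<Longrightarrow> i \<in> {1..card V} \<Longrightarrow> rank V \<pi> (\<pi> i) = i"
  unfolding vertex_order_def rank_def by (metis bij_betw_imp_inj_on inv_into_f_f)

section \<open>Core graphs and the graph G*\<close>

lemma core_edge_doubleton:
  "simple_graph V E \<Longrightarrow> e \<in> core_edges E \<pi> k \<Longrightarrow> \<exists>a b. e = {a, b} \<and> a \<noteq> b \<and> a \<in> V \<and> b \<in> V"
proof (induction k arbitrary: e)
  case 0 then show ?case by (auto simp: simple_graph_def)
next
  case (Suc k)
  let ?F = "core_edges E \<pi> k" and ?v = "\<pi> (Suc k)"
  have "e \<in> contract ?F ?v" using Suc.prems by simp
  then consider "e \<in> ?F" | a b where "e = {a, b}" "a \<noteq> b" "{?v, a} \<in> ?F" "{?v, b} \<in> ?F"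
    unfolding contract_def by blast
  then show ?case
  proof cases
    case 1 then show ?thesis using Suc by blast
  next
    case 2
    have "a \<in> V" "b \<in> V"
      using Suc.IH[OF Suc.prems(1) 2(3)] Suc.IH[OF Suc.prems(1) 2(4)]
      by (metis doubleton_eq_iff)+
    then show ?thesis using 2 by blast
  qed
qed

lemma core_edge_endpoints:
  "simple_graph V E \<Longrightarrow> {a, b} \<in> core_edges E \<pi> k \<Longrightarrow> a \<noteq> b \<and> a \<in> V \<and> b \<in> V"
  using core_edge_doubleton[of V E "{a, b}" \<pi> k] by (metis doubleton_eq_iff)

lemma core_edges_avoid_contracted:
  "simple_graph V E \<Longrightarrow> e \<in> core_edges E \<pi> k \<Longrightarrow> 1 \<le> i \<Longrightarrow> i \<le> k \<Longrightarrow> \<pi> i \<notin> e"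
proof (induction k arbitrary: e)
  case 0 then show ?case by simp
next
  case (Suc k)
  let ?F = "core_edges E \<pi> k" and ?v = "\<pi> (Suc k)"
  have "e \<in> contract ?F ?v" using Suc.prems by simp
  then consider "e \<in> ?F" "?v \<notin> e" | a b where "e = {a, b}" "{?v, a} \<in> ?F" "{?v, b} \<in> ?F"
    unfolding contract_def by blast
  then show ?case
  proof cases
    case 1 then show ?thesis using Suc by (cases "i = Suc k") auto
  next
    case 2
    have "?v \<noteq> a" "?v \<noteq> b"
      using core_edge_endpoints[OF Suc.prems(1) 2(2)] core_edge_endpoints[OF Suc.prems(1) 2(3)] by auto
    show ?thesis
    proof (cases "i = Suc k")
      case False
      then have "\<pi> i \<notin> {?v, a}" "\<pi> i \<notin> {?v, b}"
        using Suc.IH[OF Suc.prems(1) 2(2)] Suc.IH[OF Suc.prems(1) 2(3)] Suc.prems by auto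
      then show ?thesis using 2 by auto
    qed (use 2 \<open>?v \<noteq> a\<close> \<open>?v \<noteq> b\<close> in auto)
  qed
qed

lemma core_edge_persists:
  "e \<in> core_edges E \<pi> j \<Longrightarrow> j \<le> k \<Longrightarrow> (\<forall>i. j < i \<and> i \<le> k \<longrightarrow> \<pi> i \<notin> e) \<Longrightarrow> e \<in> core_edges E \<pi> k"
proof (induction k)
  case (Suc k)
  show ?case
  proof (cases "j = Suc k")
    case False
    then have "e \<in> core_edges E \<pi> k" using Suc by auto
    moreover have "\<pi> (Suc k) \<notin> e" using Suc.prems False by auto
    ultimately show ?thesis by (simp add: contract_def)
  qed (use Suc in simp)
qed simp

lemma gstar_edge_doubleton:
  "simple_graph V E \<Longrightarrow> e \<in> Gstar V E \<pi> \<Longrightarrow> \<exists>a b. e = {a, b} \<and> a \<noteq> b \<and> a \<in> V \<and> b \<in> V"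
  unfolding Gstar_def using core_edge_doubleton[of V E e \<pi>] by auto

lemma gstar_edge_endpoints:
  "simple_graph V E \<Longrightarrow> {a, b} \<in> Gstar V E \<pi> \<Longrightarrow> a \<noteq> b \<and> a \<in> V \<and> b \<in> V"
  unfolding Gstar_def using core_edge_endpoints[of V E a b \<pi>] by auto

text \<open>An edge of G* leading upwards from x is present in the core graph in which x is
  contracted: it cannot appear later, as it is incident to x, and it is not
  removed before, as neither endpoint is contracted before x.\<close>

lemma gstar_edge_in_core:
  assumes sg: "simple_graph V E" and vo: "vertex_order V \<pi>"
    and e: "{x, a} \<in> Gstar V E \<pi>" and lt: "rank V \<pi> x < rank V \<pi> a"
  shows "{x, a} \<in> core_edges E \<pi> (rank V \<pi> x - 1)"
proof -
  let ?r = "rank V \<pi>"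
  have V: "x \<in> V" "a \<in> V" using gstar_edge_endpoints[OF sg e] by auto
  have rx: "?r x \<in> {1..card V}" "\<pi> (?r x) = x" using rank_in_range[OF vo V(1)] pi_rank[OF vo V(1)] .
  have ra: "?r a \<in> {1..card V}" "\<pi> (?r a) = a" using rank_in_range[OF vo V(2)] pi_rank[OF vo V(2)] .
  obtain i where i: "{x, a} \<in> core_edges E \<pi> (i - 1)" using e unfolding Gstar_def by blast
  have before: "i - 1 < ?r x"
  proof (rule ccontr)
    assume "\<not> i - 1 < ?r x"
    then have "\<pi> (?r x) \<notin> {x, a}"
      using core_edges_avoid_contracted[OF sg i, of "?r x"] rx(1) by simp
    then show False using rx(2) by simp
  qed
  have untouched: "\<pi> j \<notin> {x, a}" if "i - 1 < j" "j \<le> ?r x - 1" for j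
  proof -
    have j: "j \<in> {1..card V}" "j < ?r x" using that rx(1) by auto
    have "?r (\<pi> j) = j" using rank_pi[OF vo j(1)] .
    then show ?thesis using j(2) lt by auto
  qed
  show ?thesis using core_edge_persists[OF i] before untouched by simp
qed

text \<open>The fill-in property of G*: two higher-ranked neighbours of a vertex x are
  adjacent, because contracting x joins them.\<close>

lemma gstar_upper_neighbours_adjacent:
  assumes sg: "simple_graph V E" and vo: "vertex_order V \<pi>"
    and xa: "{x, a} \<in> Gstar V E \<pi>" and xb: "{x, b} \<in> Gstar V E \<pi>"
    and lt_a: "rank V \<pi> x < rank V \<pi> a" and lt_b: "rank V \<pi> x < rank V \<pi> b" and "a \<noteq> b"
  shows "{a, b} \<in> Gstar V E \<pi>"
proof -
  let ?r = "rank V \<pi> x"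
  have V: "x \<in> V" "a \<in> V" using gstar_edge_endpoints[OF sg xa] by auto
  have rx: "?r \<in> {1..card V}" "\<pi> ?r = x" using rank_in_range[OF vo V(1)] pi_rank[OF vo V(1)] .
  have "{a, b} \<in> contract (core_edges E \<pi> (?r - 1)) (\<pi> ?r)"
    unfolding contract_def
    using gstar_edge_in_core[OF sg vo xa lt_a] gstar_edge_in_core[OF sg vo xb lt_b] \<open>a \<noteq> b\<close> rx(2)
    by auto
  moreover have "Suc (?r - 1) = ?r" using rx(1) by simp
  ultimately have "{a, b} \<in> core_edges E \<pi> (Suc ?r - 1)" using core_edges.simps(2)[of E \<pi> "?r - 1"] by simp
  moreover have "Suc ?r \<in> {1..card V}" using rank_in_range[OF vo V(2)] lt_a by simp
  ultimately show ?thesis unfolding Gstar_def by (rule UN_I[rotated])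
qed

lemma up_down_first_step_up:
  assumes "up_down rk (x # v # p)" "y \<in> set (v # p)" "rk x < rk y"
  shows "rk x < rk v"
proof -
  obtain j where j: "sorted_wrt (<) (map rk (take (Suc j) (x # v # p)))"
    "sorted_wrt (>) (map rk (drop j (x # v # p)))"
    using assms(1) unfolding up_down_def by blast
  show ?thesis
  proof (cases j)
    case 0
    then have "\<forall>u\<in>set (v # p). rk x > rk u" using j(2) by simp
    then show ?thesis using assms(2,3) by force
  next
    case (Suc j')
    then show ?thesis using j(1) by simp
  qed
qed

section \<open>One step of the perfect customization\<close>

definition upper_apexes :: "'a set \<Rightarrow> 'a set set \<Rightarrow> (nat \<Rightarrow> 'a) \<Rightarrow> 'a \<Rightarrow> 'a \<Rightarrow> 'a set" where
  "upper_apexes V E \<pi> x y = {z. z \<noteq> y \<and> rank V \<pi> z > rank V \<pi> x \<and>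
     {x, z} \<in> Gstar V E \<pi> \<and> {z, y} \<in> Gstar V E \<pi>}"

lemma perfect_step_same:
  "perfect_step V E \<pi> M (x, y) {x, y} =
     min (M {x, y}) (INF z \<in> upper_apexes V E \<pi> x y. M {x, z} + M {z, y})"
  by (simp add: perfect_step_def upper_apexes_def)

lemma perfect_step_other: "e \<noteq> {x, y} \<Longrightarrow> perfect_step V E \<pi> M (x, y) e = M e"
  by (simp add: perfect_step_def)

lemma perfect_step_le: "perfect_step V E \<pi> M (x, y) e \<le> M e"
  by (cases "e = {x, y}") (simp_all add: perfect_step_same perfect_step_other)

lemma pair_image_obtain:
  assumes "e \<in> set (map (\<lambda>(a, b). {a, b}) xs)"
  obtains a b where "(a, b) \<in> set xs" "{a, b} = e"
  using assms by auto

text \<open>In a valid processing order, when (x, y) is processed, every edge {v, y} of G* with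
  v above x has already been processed: it is not {x, y}, and every later pair has its
  lower endpoint at rank at most rank x.\<close>

lemma valid_order_processed_above:
  assumes valid: "valid_order V E \<pi> (done @ (x, y) # todo)"
    and vy: "{v, y} \<in> Gstar V E \<pi>" "rank V \<pi> x < rank V \<pi> v"
  obtains a b where "(a, b) \<in> set done" "{a, b} = {v, y}"
proof -
  let ?rk = "rank V \<pi>" and ?es = "done @ (x, y) # todo"
  have upward: "\<forall>(a, b) \<in> set ?es. ?rk a < ?rk b"
    and listed: "set (map (\<lambda>(a, b). {a, b}) ?es) = Gstar V E \<pi>"
    and sorted: "sorted_wrt (\<lambda>(a, _) (a', _). ?rk a \<ge> ?rk a') ?es"
    using valid unfolding valid_order_def by blast+
  have "{v, y} \<in> set (map (\<lambda>(a, b). {a, b}) ?es)" unfolding listed by (rule vy(1))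
  then obtain a b where ab: "(a, b) \<in> set ?es" "{a, b} = {v, y}" by (rule pair_image_obtain)
  have "?rk x < ?rk y" using upward by simp
  then have "?rk x < ?rk a" using ab(2) vy(2) by (auto simp: doubleton_eq_iff)
  moreover have "?rk a \<le> ?rk x" if "(a, b) \<in> set todo"
    using sorted that by (auto simp: sorted_wrt_append)
  moreover have "(a, b) \<noteq> (x, y)" using ab(2) vy(2) by (auto simp: doubleton_eq_iff)
  ultimately have "(a, b) \<in> set done" using ab(1) by fastforce
  then show ?thesis using ab(2) by (rule that)
qed

locale customized_graph =
  fixes V :: "'a set" and E :: "'a set set" and w :: "'a set \<Rightarrow> real"
    and \<pi> :: "nat \<Rightarrow> 'a" and mC :: "'a set \<Rightarrow> ereal"
  assumes simple: "simple_graph V E"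
    and order: "vertex_order V \<pi>"
    and cust: "customized V E \<pi> w mC"
begin

abbreviation Gs :: "'a set set" where "Gs \<equiv> Gstar V E \<pi>"
abbreviation rk :: "'a \<Rightarrow> nat" where "rk \<equiv> rank V \<pi>"
abbreviation d :: "'a \<Rightarrow> 'a \<Rightarrow> ereal" where "d \<equiv> dist_A V E \<pi> mC"

lemma mC_nonneg: "\<forall>e\<in>Gs. mC e \<ge> 0"
  using cust unfolding customized_def is_metric_def by (auto intro: less_imp_le)

lemma d_sym: "d a b = d b a"
  unfolding dist_A_def by (rule dist_sym)

lemma exact_doubleton:
  assumes "M {a, b} = d a b" "{a, b} = {c, e}"
  shows "M {c, e} = d c e"
  using assms d_sym[of c e] by (auto simp: doubleton_eq_iff insert_commute)

lemma d_triangle: "d a b \<le> d a z + d z b"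
proof -
  have "\<forall>e\<in>Gs. \<exists>u v. e = {u, v} \<and> u \<in> V \<and> v \<in> V"
    using gstar_edge_doubleton[OF simple] by meson
  moreover have "finite V" using simple by (simp add: simple_graph_def)
  ultimately show ?thesis unfolding dist_A_def by (rule dist_triangle[OF _ _ mC_nonneg])
qed

lemma d_le_edge: "{a, b} \<in> Gs \<Longrightarrow> d a b \<le> mC {a, b}"
  using dist_le_path[of Gs "[a, b]" a b mC] gstar_edge_endpoints[OF simple]
  by (simp add: dist_A_def is_path_iff_walk plen_eq_walk_len)

lemma d_le_path: "is_path Gs p a b \<Longrightarrow> d a b \<le> plen mC p"
  unfolding dist_A_def by (rule dist_le_path)

lemma d_up_down:
  assumes "a \<in> V" "b \<in> V"
  shows "d a b = Inf {plen mC p | p. is_path Gs p a b \<and> up_down rk p}"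
proof -
  have "dist_UD V E \<pi> mC a b = d a b" using cust assms unfolding customized_def by blast
  then show ?thesis by (simp add: dist_UD_def)
qed

lemma d_eq_dist_I: "a \<in> V \<Longrightarrow> b \<in> V \<Longrightarrow> d a b = dist_I E w a b"
  using cust unfolding customized_def respects_w_def by blast

text \<open>The invariant of the customization: on every edge of G* the current metric
  lies between the distance d and the customized metric mC.\<close>

definition sandwiched :: "('a set \<Rightarrow> ereal) \<Rightarrow> bool" where
  "sandwiched M \<longleftrightarrow> (\<forall>a b. {a, b} \<in> Gs \<longrightarrow> d a b \<le> M {a, b} \<and> M {a, b} \<le> mC {a, b})"

lemma sandwiched_mC: "sandwiched mC"
  unfolding sandwiched_def using d_le_edge by simp

lemma perfect_step_lower:
  assumes M: "sandwiched M" and xy: "{x, y} \<in> Gs"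
  shows "d x y \<le> perfect_step V E \<pi> M (x, y) {x, y}"
  unfolding perfect_step_same min.bounded_iff
proof
  show "d x y \<le> M {x, y}" using M xy unfolding sandwiched_def by blast
  show "d x y \<le> (INF z \<in> upper_apexes V E \<pi> x y. M {x, z} + M {z, y})"
  proof (rule INF_greatest)
    fix z assume "z \<in> upper_apexes V E \<pi> x y"
    then have "d x z + d z y \<le> M {x, z} + M {z, y}"
      using M unfolding upper_apexes_def sandwiched_def by (blast intro: add_mono)
    then show "d x y \<le> M {x, z} + M {z, y}" using d_triangle[of x y z] by simp
  qed
qed

lemma perfect_step_upper:
  assumes M: "sandwiched M" and xy: "{x, y} \<in> Gs" "rk x < rk y"
    and exact_above: "\<And>v. {v, y} \<in> Gs \<Longrightarrow> rk x < rk v \<Longrightarrow> M {v, y} = d v y"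
    and p: "is_path Gs p x y" "up_down rk p"
  shows "perfect_step V E \<pi> M (x, y) {x, y} \<le> plen mC p"
proof -
  have "x \<noteq> y" using gstar_edge_endpoints[OF simple xy(1)] by simp
  then obtain v rest where p_eq: "p = x # v # rest"
    using p(1) unfolding is_path_iff_walk by (metis last.simps list.collapse)
  have path: "distinct p" "walk Gs p" "last p = y" using p(1) unfolding is_path_iff_walk by auto
  show ?thesis
  proof (cases "rest = []")
    case True
    then have "plen mC p = mC {x, y}" using path(3) p_eq by (simp add: plen_eq_walk_len)
    then show ?thesis
      using perfect_step_le[of V E \<pi> M x y "{x, y}"] M xy unfolding sandwiched_def
      by (metis order_trans)
  next
    case False
    have y_in: "y \<in> set rest" using path(3) p_eq last_in_set[OF False] False by simp
    have xv: "{x, v} \<in> Gs" and v_ne_y: "v \<noteq> y" using path(1,2) p_eq y_in by auto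
    have v_above: "rk x < rk v"
      using up_down_first_step_up[of rk x v rest y] p(2) p_eq y_in xy(2) by simp
    have vy: "{v, y} \<in> Gs"
      using gstar_upper_neighbours_adjacent[OF simple order xv xy(1) v_above xy(2) v_ne_y] .
    have tail: "is_path Gs (v # rest) v y" using p(1) p_eq unfolding is_path_iff_walk by auto
    have "perfect_step V E \<pi> M (x, y) {x, y} \<le> M {x, v} + M {v, y}"
      unfolding perfect_step_same using v_ne_y v_above xv vy
      by (auto simp: upper_apexes_def intro!: min.coboundedI2 INF_lower)
    also have "\<dots> \<le> mC {x, v} + plen mC (v # rest)"
    proof (rule add_mono)
      show "M {x, v} \<le> mC {x, v}" using M xv unfolding sandwiched_def by blast
      show "M {v, y} \<le> plen mC (v # rest)" using exact_above[OF vy v_above] d_le_path[OF tail] by simp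
    qed
    also have "\<dots> = plen mC p" using p_eq by (simp add: plen_eq_walk_len)
    finally show ?thesis .
  qed
qed

text \<open>Hence, since d is attained by up-down paths, the update of {x, y} is exact.\<close>

lemma perfect_step_exact:
  assumes M: "sandwiched M" and xy: "{x, y} \<in> Gs" "rk x < rk y"
    and exact_above: "\<And>v. {v, y} \<in> Gs \<Longrightarrow> rk x < rk v \<Longrightarrow> M {v, y} = d v y"
  shows "perfect_step V E \<pi> M (x, y) {x, y} = d x y"
proof (rule antisym)
  have V: "x \<in> V" "y \<in> V" using gstar_edge_endpoints[OF simple xy(1)] by auto
  show "perfect_step V E \<pi> M (x, y) {x, y} \<le> d x y"
    unfolding d_up_down[OF V]
  proof (rule Inf_greatest)
    fix u assume "u \<in> {plen mC p | p. is_path Gs p x y \<and> up_down rk p}"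
    then obtain p where p: "u = plen mC p" "is_path Gs p x y" "up_down rk p" by blast
    show "perfect_step V E \<pi> M (x, y) {x, y} \<le> u"
      unfolding p(1) using M xy exact_above p(2,3) by (rule perfect_step_upper)
  qed
qed (rule perfect_step_lower[OF M xy(1)])

lemma perfect_step_sandwiched:
  assumes "sandwiched M" "perfect_step V E \<pi> M (x, y) {x, y} = d x y"
  shows "sandwiched (perfect_step V E \<pi> M (x, y))"
  unfolding sandwiched_def
proof (intro allI impI)
  fix a b assume ab: "{a, b} \<in> Gs"
  show "d a b \<le> perfect_step V E \<pi> M (x, y) {a, b} \<and> perfect_step V E \<pi> M (x, y) {a, b} \<le> mC {a, b}"
  proof (cases "{a, b} = {x, y}")
    case True
    then have "{x, y} = {a, b}" by simp
    with assms(2) have "perfect_step V E \<pi> M (x, y) {a, b} = d a b" by (rule exact_doubleton)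
    moreover have "perfect_step V E \<pi> M (x, y) {a, b} \<le> mC {a, b}"
      using perfect_step_le[of V E \<pi> M x y "{a, b}"] assms(1) ab unfolding sandwiched_def
      by (blast intro: order_trans)
    ultimately show ?thesis by simp
  next
    case False
    then have "perfect_step V E \<pi> M (x, y) {a, b} = M {a, b}" by (rule perfect_step_other)
    then show ?thesis using assms(1) ab unfolding sandwiched_def by simp
  qed
qed

section \<open>The whole customization\<close>

definition exact_on :: "('a \<times> 'a) set \<Rightarrow> ('a set \<Rightarrow> ereal) \<Rightarrow> bool" where
  "exact_on S M \<longleftrightarrow> (\<forall>a b. (a, b) \<in> S \<longrightarrow> M {a, b} = d a b)"

text \<open>Each step is exact because the edges above the processed one are done.\<close>

lemma perfect_fold_exact:
  assumes "valid_order V E \<pi> (done @ todo)" "sandwiched M" "exact_on (set done) M"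
  shows "exact_on (set (done @ todo)) (foldl (perfect_step V E \<pi>) M todo)"
  using assms
proof (induction todo arbitrary: "done" M)
  case (Cons t todo)
  obtain x y where t: "t = (x, y)" by (cases t)
  let ?M' = "perfect_step V E \<pi> M (x, y)"
  have order: "\<forall>(a, b) \<in> set (done @ t # todo). rk a < rk b"
    "distinct (map (\<lambda>(a, b). {a, b}) (done @ t # todo))"
    "set (map (\<lambda>(a, b). {a, b}) (done @ t # todo)) = Gs"
    using Cons.prems(1) unfolding valid_order_def by blast+
  have xy: "{x, y} \<in> Gs" "rk x < rk y" using order(1,3) t by auto
  have fresh: "{x, y} \<notin> (\<lambda>(a, b). {a, b}) ` set done" using order(2) t by auto
  have exact_above: "M {v, y} = d v y" if vy: "{v, y} \<in> Gs" "rk x < rk v" for v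
  proof -
    obtain a b where "(a, b) \<in> set done" "{a, b} = {v, y}"
      using Cons.prems(1) vy unfolding t by (rule valid_order_processed_above)
    then show ?thesis using Cons.prems(3) exact_doubleton unfolding exact_on_def by blast
  qed
  have new: "?M' {x, y} = d x y" using perfect_step_exact[OF Cons.prems(2) xy exact_above] .
  have "exact_on (set (done @ [t])) ?M'"
    unfolding exact_on_def
  proof (intro allI impI)
    fix a b assume ab: "(a, b) \<in> set (done @ [t])"
    show "?M' {a, b} = d a b"
    proof (cases "(a, b) = t")
      case True
      then show ?thesis using new t by simp
    next
      case False
      then have in_done: "(a, b) \<in> set done" using ab by simp
      then have "{a, b} \<noteq> {x, y}" using fresh by (auto intro: rev_image_eqI)
      then have "?M' {a, b} = M {a, b}" by (rule perfect_step_other)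
      also have "\<dots> = d a b" using Cons.prems(3) in_done unfolding exact_on_def by blast
      finally show ?thesis .
    qed
  qed
  moreover have "sandwiched ?M'" using perfect_step_sandwiched[OF Cons.prems(2) new] .
  moreover have "valid_order V E \<pi> ((done @ [t]) @ todo)" using Cons.prems(1) by simp
  ultimately show ?case using Cons.IH[of "done @ [t]" ?M'] t by simp
qed simp

end

theorem mainTheorem6:
  fixes V :: "'a set" and E :: "'a set set" and w :: "'a set \<Rightarrow> real"
    and \<pi> :: "nat \<Rightarrow> 'a" and mC :: "'a set \<Rightarrow> ereal" and es :: "('a \<times> 'a) list"
  assumes "simple_graph V E"
    and "connected_graph V E"
    and "\<forall>e\<in>E. w e > 0"
    and "vertex_order V \<pi>"
    and "customized V E \<pi> w mC"
    and "valid_order V E \<pi> es"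
  shows "\<forall>x y. {x, y} \<in> Gstar V E \<pi> \<longrightarrow>
           perfect_customization V E \<pi> es mC {x, y} = dist_I E w x y"
proof (intro allI impI)
  interpret customized_graph V E w \<pi> mC using assms(1,4,5) by unfold_locales
  fix x y assume xy: "{x, y} \<in> Gstar V E \<pi>"
  have exact: "exact_on (set es) (perfect_customization V E \<pi> es mC)"
    using perfect_fold_exact[of "[]" es mC] assms(6) sandwiched_mC
    by (simp add: perfect_customization_def exact_on_def)
  have "{x, y} \<in> set (map (\<lambda>(a, b). {a, b}) es)" using xy assms(6) by (simp only: valid_order_def)
  then obtain a b where ab: "(a, b) \<in> set es" "{a, b} = {x, y}" by (rule pair_image_obtain)
  have "perfect_customization V E \<pi> es mC {x, y} = dist_A V E \<pi> mC x y"
    using exact ab exact_doubleton unfolding exact_on_def by blast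
  also have "\<dots> = dist_I E w x y"
    using gstar_edge_endpoints[OF assms(1) xy] by (simp add: d_eq_dist_I)
  finally show "perfect_customization V E \<pi> es mC {x, y} = dist_I E w x y" .
qed

end
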